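(* Let $x,y\in\mathbb{C}$ with $x^N+y^N=1$, and assume no denominators below vanish. Suppose the branches in the definition of $w$ are fixed so that, for all $n\in\mathbb{Z}$, $$w(x,y|n)=w(\omega^nx,y|0)\quad\text{and}\quad w(y,x|n)=w(\omega^ny,x|0),$$ and so that the chosen values of $(x/y)^{(N-1)/2}$ and $(y/x)^{(N-1)/2}$ are reciprocal, with squares $(x/y)^{N-1}$ and $(y/x)^{N-1}$ respectively. Then for every integer $n$, $$\sum_{k=0}^{N-1}w(x,y|k)\,\omega^{nk}=N\,\frac{(x/y)^{(N-1)/2}}{\lambda(y,x)}\,\frac{1}{w(y,x|n-1)}.$$
   Context: Let $N\ge2$ and $\omega=e^{2\pi i/N}$. For $x,y\in\mathbb{C}$ with $x^N+y^N=1$, define $$w(x,y|0)=y^{\frac{1-N}{2}}\prod_{j=1}^{N-1}(1-\omega^{-j}x)^{j/N}$$ for fixed choices of the fractional powers, and $$w(x,y|n)=w(x,y|0)\prod_{j=1}^{n}\frac{y}{1-\omega^jx}\quad (n\ge0),$$ extended $N$-periodically in $n$ (this function is $N$-periodic in $n$). Define $$\lambda(x,y)=\frac{(x/y)^{(N-1)/2}}{w(x,y|0)}\sum_{k=0}^{N-1}\frac{1}{w(y,x|k)},$$ and define $\lambda(y,x)$ by the same formula with $x$ and $y$ interchanged. *)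

theory Defs
  imports Complex_Main
begin

definition omega :: "nat \<Rightarrow> complex" where
  "omega N = cis (2 * pi / real N)"

text \<open>W a b is a legitimate value of w(a,b|0) = b^((1-N)/2) * prod_{j=1}^{N-1} (1 - omega^(-j) a)^(j/N)
  for SOME choice of the fractional powers: c is a square root of b^(1-N), and d j is an
  N-th root of (1 - omega^(-j) a)^j.\<close>
definition is_w0 :: "nat \<Rightarrow> (complex \<Rightarrow> complex \<Rightarrow> complex) \<Rightarrow> complex \<Rightarrow> complex \<Rightarrow> bool" where
  "is_w0 N W a b \<longleftrightarrow>
     (\<exists>c d. c ^ 2 = b powi (1 - int N) \<and>
            (\<forall>j\<in>{1..N-1}. (d j) ^ N = (1 - omega N powi (- int j) * a) ^ j) \<and>
            W a b = c * (\<Prod>j=1..N-1. d j))"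

definition wfun :: "nat \<Rightarrow> (complex \<Rightarrow> complex \<Rightarrow> complex) \<Rightarrow> complex \<Rightarrow> complex \<Rightarrow> int \<Rightarrow> complex" where
  "wfun N W a b n = W a b * (\<Prod>j=1..nat (n mod int N). b / (1 - omega N ^ j * a))"

text \<open>lambda(a,b) = r / w(a,b|0) * sum_{k=0}^{N-1} 1 / w(b,a|k), where r is the chosen
  value of (a/b)^((N-1)/2).\<close>
definition lam :: "nat \<Rightarrow> (complex \<Rightarrow> complex \<Rightarrow> complex) \<Rightarrow> complex \<Rightarrow> complex \<Rightarrow> complex \<Rightarrow> complex" where
  "lam N W r a b = r / W a b * (\<Sum>k=0..N-1. 1 / wfun N W b a (int k))"

end

theory Submission
  imports Defs "HOL-Computational_Algebra.Polynomial"
begin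

(* Write a(k) = w(x,y|k) and b(k) = w(y,x|k); both are N-periodic, nonzero and
   satisfy the first-order recurrences
       a(k) (1 - omega^k x) = y a(k-1),     b(k) (1 - omega^k y) = x b(k-1),
   the wrap-around case k = 0 being the identity prod_j (1 - omega^j u) = 1 - u^N together
   with the curve x^N + y^N = 1.  Let F(n) = sum_k a(k) omega^(nk) be the discrete Fourier
   transform of a, and E(m) the transform of 1/a.  Shifting the summation index turns the
   recurrence for a into  x F(n+1) = (1 - omega^n y) F(n); comparing with the recurrence
   for b shows that F(n) b(n-1) = C is independent of n.  Likewise E(-n) is proportional to
   omega^n b(n).  Parseval's identity sum_n F(n) E(-n) = N^2 together with the partial
   fraction sum  sum_n omega^n / (1 - omega^n y) = N y^(N-1) / (1 - y^N)  determines
   C E(0) = N b(0) (x/y)^(N-1).  Since lambda(y,x) = t E(0) / b(0), this is the claim. *)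

subsection \<open>Roots of unity\<close>

lemma omega_power: "omega N ^ k = cis (2 * pi * real k / real N)"
  by (simp add: omega_def DeMoivre mult_ac)

lemma omega_nonzero [simp]: "omega N \<noteq> 0"
  by (simp add: omega_def)

lemma omega_power_N: "N > 0 \<Longrightarrow> omega N ^ N = 1"
  by (simp add: omega_power complex_eq_iff)

lemma omega_power_mult_N: "N > 0 \<Longrightarrow> omega N ^ (n * N) = 1"
  by (simp add: power_mult[symmetric] mult.commute[of n] power_mult omega_power_N)

lemma omega_power_inj:
  assumes "N > 0" "k < N" "l < N" "omega N ^ k = omega N ^ l"
  shows "k = l"
  using bij_betw_roots_unity[OF assms(1)] assms(2-4)
  unfolding bij_betw_def inj_on_def omega_power by auto

lemma omega_powi_mod:
  assumes "N > 0"
  shows "omega N powi k = omega N ^ nat (k mod int N)"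
proof -
  have "omega N powi k = omega N powi (int N * (k div int N)) * omega N powi (k mod int N)"
    by (metis omega_nonzero power_int_add div_mult_mod_eq mult.commute)
  also have "omega N powi (int N * (k div int N)) = 1"
    by (simp add: power_int_mult power_int_of_nat omega_power_N assms)
  also have "omega N powi (k mod int N) = omega N ^ nat (k mod int N)"
    using assms by (metis int_nat_eq power_int_of_nat pos_mod_sign of_nat_0_less_iff)
  finally show ?thesis by simp
qed

lemma omega_orthogonality:
  assumes "N > 0" "k < N" "l < N"
  shows "(\<Sum>n<N. omega N ^ (n * k) / omega N ^ (n * l)) = (if k = l then of_nat N else 0)"
proof (cases "k = l")
  case False
  define z where "z = omega N ^ k / omega N ^ l"
  have "z \<noteq> 1" using omega_power_inj[OF assms] False by (auto simp: z_def)
  moreover have "z ^ N = 1"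
    by (simp add: z_def power_divide power_mult[symmetric] mult.commute[of _ N] power_mult
        omega_power_N assms)
  moreover have "(\<Sum>n<N. omega N ^ (n * k) / omega N ^ (n * l)) = (\<Sum>n<N. z ^ n)"
    by (simp add: z_def power_divide power_mult[symmetric] mult.commute)
  ultimately show ?thesis using False geometric_sum[of z N] by simp
qed simp

text \<open>The factorisation \<open>1 - u^N = prod_j (1 - omega^j u)\<close>: both sides are polynomials in \<open>u\<close>
  of degree at most \<open>N\<close> that agree at \<open>0\<close> and at the \<open>N\<close> roots of unity.\<close>
lemma prod_one_minus_omega:
  assumes N: "N > 0"
  shows "(\<Prod>j<N. 1 - omega N ^ j * u) = 1 - u ^ N"
proof -
  define p where "p = (\<Prod>j<N. [:1, - (omega N ^ j):])"
  define q :: "complex poly" where "q = [:1:] - monom 1 N"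
  have p_eval: "poly p u = (\<Prod>j<N. 1 - omega N ^ j * u)" for u
    by (simp add: p_def poly_prod mult.commute)
  have q_eval: "poly q u = 1 - u ^ N" for u
    by (simp add: q_def poly_monom)
  have "degree p \<le> (\<Sum>j<N. degree [:1, - (omega N ^ j):])"
    unfolding p_def using degree_prod_sum_le[of "{..<N}" "\<lambda>j. [:1, - (omega N ^ j):]"]
    by (simp add: o_def)
  also have "\<dots> \<le> N" using sum_mono[of "{..<N}" _ "\<lambda>_. 1"] by simp
  finally have deg_p: "degree p \<le> N" .
  have deg_q: "degree q \<le> N" unfolding q_def
    by (metis degree_diff_le degree_monom_le degree_pCons_0 le0)
  define A where "A = insert 0 {z::complex. z ^ N = 1}"
  have "finite {z::complex. z ^ N = 1}" using N by (intro finite_roots_unity) auto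
  hence card_A: "card A = Suc N" unfolding A_def using N
    by (subst card_insert_disjoint) (auto simp: card_roots_unity_eq power_0_left)
  have "poly p z = poly q z" if "z \<in> A" for z
  proof (cases "z = 0")
    case False
    with that have "z ^ N = 1" by (simp add: A_def)
    then obtain k where k: "k < N" "z = omega N ^ k"
      using bij_betw_roots_unity[OF N] unfolding bij_betw_def omega_power by auto
    have "omega N ^ ((N - k) mod N) * z = omega N ^ ((N - k) mod N + k)"
      by (simp add: k power_add)
    also have "\<dots> = 1"
      using k omega_power_N[OF N] by (cases "k = 0") auto
    finally have "(\<Prod>j<N. 1 - omega N ^ j * z) = 0"
      using N by (intro prod_zero bexI[where x = "(N - k) mod N"]) auto
    with \<open>z ^ N = 1\<close> show ?thesis by (simp add: p_eval q_eval)
  qed (use N in \<open>simp add: p_eval q_eval\<close>)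
  hence "p = q" using card_A deg_p deg_q by (intro poly_eqI_degree[of A]) auto
  thus ?thesis using p_eval q_eval by metis
qed

text \<open>A partial-fraction sum over the roots of unity, obtained by expanding each term as a
  geometric series and applying orthogonality: only the coefficient of \<open>y^(N-1)\<close> survives.\<close>
lemma sum_omega_over_one_minus:
  assumes N: "N > 0" and nz: "\<forall>j::nat. 1 - omega N ^ j * y \<noteq> 0" and yN: "1 - y ^ N \<noteq> 0"
  shows "(\<Sum>n<N. omega N ^ n / (1 - omega N ^ n * y)) = of_nat N * y ^ (N - 1) / (1 - y ^ N)"
proof -
  have expand: "omega N ^ n / (1 - omega N ^ n * y)
      = (\<Sum>m<N. y ^ m * omega N ^ (n * Suc m)) / (1 - y ^ N)" for n
  proof -
    define z where "z = omega N ^ n * y"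
    have "z \<noteq> 1" using nz by (auto simp: z_def)
    moreover have "z ^ N = y ^ N"
      by (simp add: z_def power_mult_distrib omega_power_mult_N N flip: power_mult mult.commute[of n])
    ultimately have "1 / (1 - z) = (\<Sum>m<N. z ^ m) / (1 - y ^ N)"
      using geometric_sum[of z N] yN by (simp add: field_simps)
    hence "omega N ^ n / (1 - z) = omega N ^ n * (\<Sum>m<N. z ^ m) / (1 - y ^ N)"
      by (metis times_divide_eq_right mult.right_neutral)
    also have "omega N ^ n * (\<Sum>m<N. z ^ m) = (\<Sum>m<N. y ^ m * omega N ^ (n * Suc m))"
      by (simp add: sum_distrib_left z_def power_mult_distrib algebra_simps
          flip: power_mult power_add)
    finally show ?thesis by (simp add: z_def)
  qed
  have coefficient: "y ^ m * (\<Sum>n<N. omega N ^ (n * Suc m))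
      = (if m = N - 1 then y ^ m * of_nat N else 0)" if "m < N" for m
  proof (cases "m = N - 1")
    case True
    hence "Suc m = N" using that by auto
    thus ?thesis using True by (simp add: omega_power_mult_N N)
  next
    case False
    hence "Suc m < N" using that by auto
    thus ?thesis using False omega_orthogonality[OF N, of "Suc m" 0] N by simp
  qed
  have "(\<Sum>n<N. omega N ^ n / (1 - omega N ^ n * y))
      = (\<Sum>n<N. \<Sum>m<N. y ^ m * omega N ^ (n * Suc m)) / (1 - y ^ N)"
    by (simp add: expand sum_divide_distrib)
  also have "(\<Sum>n<N. \<Sum>m<N. y ^ m * omega N ^ (n * Suc m))
      = (\<Sum>m<N. y ^ m * (\<Sum>n<N. omega N ^ (n * Suc m)))"
    by (subst sum.swap) (simp add: sum_distrib_left)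
  also have "\<dots> = (\<Sum>m<N. if m = N - 1 then y ^ m * of_nat N else 0)"
    by (intro sum.cong refl coefficient) simp
  also have "\<dots> = y ^ (N - 1) * of_nat N"
    using N by (simp add: sum.delta)
  finally show ?thesis by (simp add: mult.commute)
qed

subsection \<open>The discrete Fourier transform\<close>

definition dft :: "nat \<Rightarrow> (int \<Rightarrow> complex) \<Rightarrow> int \<Rightarrow> complex" where
  "dft N f n = (\<Sum>k<N. f (int k) * omega N powi (n * int k))"

lemma dft_shift:
  assumes N: "N > 0" and per: "\<And>j. h (j + int N) = h j"
  shows "dft N (\<lambda>j. h (j - 1)) m = omega N powi m * dft N h m"
proof -
  define g where "g j = h j * omega N powi (m * j)" for j
  have g_per: "g (j + int N) = g j" for j
  proof -
    have "(m * (j + int N)) mod int N = (m * j) mod int N"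
      by (simp add: distrib_left mod_add_right_eq[symmetric])
    thus ?thesis by (simp add: g_def per omega_powi_mod[OF N])
  qed
  have shifted_sum: "(\<Sum>k<N. g (int k - 1)) = (\<Sum>k<N. g (int k))"
  proof -
    obtain M where M: "N = Suc M" using N by (cases N) auto
    have "(\<Sum>k<N. g (int k - 1)) = g (-1) + (\<Sum>k<M. g (int k))"
      unfolding M by (subst sum.lessThan_Suc_shift) simp
    also have "g (-1) = g (int M)" using g_per[of "-1"] M by simp
    finally show ?thesis unfolding M by simp
  qed
  have "omega N powi (m * int k) = omega N powi m * omega N powi (m * (int k - 1))" for k
    by (simp add: algebra_simps flip: power_int_add)
  hence "dft N (\<lambda>j. h (j - 1)) m = omega N powi m * (\<Sum>k<N. g (int k - 1))"
    by (simp add: dft_def g_def sum_distrib_left algebra_simps)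
  thus ?thesis using shifted_sum by (simp add: g_def dft_def)
qed

lemma dft_parseval:
  assumes N: "N > 0"
  shows "(\<Sum>n<N. dft N f (int n) * dft N g (- int n)) = of_nat N * (\<Sum>k<N. f (int k) * g (int k))"
proof -
  have at_nat: "dft N f (int n) = (\<Sum>k<N. f (int k) * omega N ^ (n * k))" for f n
    by (simp add: dft_def flip: power_int_of_nat)
  have at_neg: "dft N g (- int n) = (\<Sum>l<N. g (int l) / omega N ^ (n * l))" for g n
    by (simp add: dft_def power_int_minus divide_inverse flip: power_int_of_nat)
  have "(\<Sum>n<N. dft N f (int n) * dft N g (- int n))
      = (\<Sum>n<N. \<Sum>k<N. \<Sum>l<N. f (int k) * g (int l) * (omega N ^ (n * k) / omega N ^ (n * l)))"
    unfolding at_nat at_neg sum_product by (intro sum.cong refl) simp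
  also have "\<dots> = (\<Sum>k<N. \<Sum>l<N. f (int k) * g (int l) * (\<Sum>n<N. omega N ^ (n * k) / omega N ^ (n * l)))"
    unfolding sum_distrib_left by (subst sum.swap) (rule sum.cong[OF refl], rule sum.swap)
  also have "\<dots> = (\<Sum>k<N. \<Sum>l<N. if l = k then of_nat N * (f (int k) * g (int k)) else 0)"
    by (intro sum.cong refl) (auto simp: omega_orthogonality N)
  finally show ?thesis by (simp add: sum_distrib_left)
qed

subsection \<open>The recurrence for \<open>w\<close>\<close>

lemma wfun_zero: "wfun N W u v 0 = W u v"
  by (simp add: wfun_def)

lemma wfun_periodic: "wfun N W u v (j + int N) = wfun N W u v j"
  by (simp add: wfun_def)

text \<open>For \<open>k\<close> not divisible by \<open>N\<close>
  this is the definition; at \<open>k = 0\<close> it wraps around the full period and uses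
  \<open>prod_j (1 - omega^j u) = 1 - u^N = v^N\<close>.\<close>
lemma wfun_recurrence:
  assumes N: "N > 0" and curve: "u ^ N + v ^ N = 1"
    and nz: "\<forall>j::nat. 1 - omega N ^ j * u \<noteq> 0"
  shows "wfun N W u v k * (1 - omega N powi k * u) = v * wfun N W u v (k - 1)"
proof -
  define r where "r = k mod int N"
  have r_range: "0 \<le> r" "r < int N" using N by (auto simp: r_def)
  have omega_k: "omega N powi k = omega N ^ nat r" using omega_powi_mod[OF N] by (simp add: r_def)
  have pred_mod: "(k - 1) mod int N = (r - 1) mod int N" by (simp add: r_def mod_diff_left_eq)
  show ?thesis
  proof (cases "r > 0")
    case True
    define f where "f j = v / (1 - omega N ^ j * u)" for j
    define m where "m = nat (r - 1)"
    have r_Suc: "nat r = Suc m" using True by (simp add: m_def)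
    have "(k - 1) mod int N = r - 1" using pred_mod True r_range by simp
    hence "wfun N W u v (k - 1) = W u v * prod f {1..m}"
      by (simp add: wfun_def f_def m_def)
    moreover have "wfun N W u v k = W u v * prod f {1..m} * f (Suc m)"
      by (simp add: wfun_def f_def flip: r_def add: r_Suc prod.cl_ivl_Suc)
    moreover have "f (Suc m) * (1 - omega N ^ Suc m * u) = v"
      using nz[rule_format, of "Suc m"] by (simp add: f_def)
    ultimately show ?thesis by (simp add: omega_k r_Suc)
  next
    case False
    hence r0: "r = 0" using r_range by simp
    obtain M where M: "N = Suc M" using N by (cases N) auto
    define P where "P = (\<Prod>j=1..M. 1 - omega N ^ j * u)"
    have "(k - 1) mod int N = int M"
      using pred_mod r0 M by (simp add: mod_pos_pos_trivial zmod_minus1)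
    hence w_pred: "wfun N W u v (k - 1) = W u v * (v ^ M / P)"
      by (simp add: wfun_def P_def prod_dividef)
    have "P \<noteq> 0" using nz by (simp add: P_def)
    have "{..<N} = insert 0 {1..M}" using M by auto
    hence "(1 - u) * P = 1 - u ^ N"
      using prod_one_minus_omega[OF N, of u] by (simp add: P_def)
    also have "\<dots> = v ^ N" using curve by (simp add: algebra_simps)
    finally have "(1 - u) * P = v ^ N" .
    hence "1 - u = v * (v ^ M / P)" using \<open>P \<noteq> 0\<close> M by (simp add: field_simps)
    thus ?thesis
      using w_pred omega_k r0 by (simp add: wfun_def flip: r_def)
  qed
qed

subsection \<open>Fourier transforms of solutions of the recurrence\<close>

locale recurrence_pair =
  fixes N :: nat and x y :: complex and a b :: "int \<Rightarrow> complex"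
  assumes N_pos: "N > 0"
    and curve: "x ^ N + y ^ N = 1"
    and x_nz: "x \<noteq> 0" and y_nz: "y \<noteq> 0"
    and y_factors_nz: "\<forall>j::nat. 1 - omega N ^ j * y \<noteq> 0"
    and a_rec: "a k * (1 - omega N powi k * x) = y * a (k - 1)"
    and b_rec: "b k * (1 - omega N powi k * y) = x * b (k - 1)"
    and a_periodic: "a (k + int N) = a k"
    and a_nz: "a k \<noteq> 0" and b_nz: "b k \<noteq> 0"
begin

lemma omega_powi_succ: "omega N powi ((n + 1) * k) = omega N powi (n * k) * omega N powi k"
  by (simp add: distrib_right power_int_add)

lemma dft_recurrence: "x * dft N a (n + 1) = (1 - omega N powi n * y) * dft N a n"
proof -
  have term_rec: "x * (a (int k) * omega N powi ((n + 1) * int k))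
      = a (int k) * omega N powi (n * int k) - y * (a (int k - 1) * omega N powi (n * int k))" for k
  proof -
    have "a (int k) * (omega N powi int k * x) = a (int k) - y * a (int k - 1)"
      using a_rec[of "int k"] by (simp add: algebra_simps)
    from arg_cong[OF this, of "\<lambda>z. z * omega N powi (n * int k)"] show ?thesis
      unfolding omega_powi_succ by (simp add: algebra_simps)
  qed
  have "x * dft N a (n + 1) = dft N a n - y * dft N (\<lambda>j. a (j - 1)) n"
    by (simp add: dft_def sum_distrib_left term_rec sum_subtractf)
  thus ?thesis using dft_shift[of N a, OF N_pos a_periodic] by (simp add: algebra_simps)
qed

lemma dft_recip_recurrence:
  "x * omega N powi (m + 1) * dft N (\<lambda>k. 1 / a k) (m + 1) = (omega N powi m - y) * dft N (\<lambda>k. 1 / a k) m"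
proof -
  define ia where "ia = (\<lambda>k. 1 / a k)"
  have ia_periodic: "ia (k + int N) = ia k" for k by (simp add: ia_def a_periodic)
  have term_rec: "y * (ia (int k) * omega N powi (m * int k))
      = ia (int k - 1) * omega N powi (m * int k) - x * (ia (int k - 1) * omega N powi ((m + 1) * int k))" for k
  proof -
    have "y * ia (int k) = ia (int k - 1) - omega N powi int k * x * ia (int k - 1)"
      using a_rec[of "int k"] a_nz[of "int k"] a_nz[of "int k - 1"]
      by (simp add: ia_def field_simps)
    from arg_cong[OF this, of "\<lambda>z. z * omega N powi (m * int k)"] show ?thesis
      unfolding omega_powi_succ by (simp add: algebra_simps)
  qed
  have "y * dft N ia m = dft N (\<lambda>j. ia (j - 1)) m - x * dft N (\<lambda>j. ia (j - 1)) (m + 1)"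
    by (simp add: dft_def sum_distrib_left term_rec sum_subtractf)
  thus ?thesis using dft_shift[of N ia, OF N_pos ia_periodic]
    unfolding ia_def[symmetric] by (simp add: algebra_simps)
qed

text \<open>Comparing the recurrences of \<open>F\<close> and \<open>b\<close>: the product \<open>F(n) b(n-1)\<close> does not depend on \<open>n\<close>.\<close>
lemma dft_times_b_constant: "dft N a n * b (n - 1) = dft N a 0 * b (-1)"
proof -
  have step: "dft N a (i + 1) * b i = dft N a i * b (i - 1)" for i
  proof -
    have "x * (dft N a (i + 1) * b i) = x * (dft N a i * b (i - 1))"
      using dft_recurrence[of i] b_rec[of i] by (metis mult.assoc mult.commute)
    thus ?thesis using x_nz by simp
  qed
  show ?thesis
  proof (induction n rule: int_induct[where k = 0])
    case (step1 i) then show ?case using step[of i] by simp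
  next
    case (step2 i) then show ?case using step[of "i - 1"] by simp
  qed simp
qed

text \<open>Comparing the recurrences of \<open>E\<close> and \<open>b\<close>: \<open>E(-n)\<close> is proportional to \<open>omega^n b(n)\<close>.\<close>
lemma dft_recip_reflected: "dft N (\<lambda>k. 1 / a k) (- int n) * b 0 = omega N ^ n * b (int n) * dft N (\<lambda>k. 1 / a k) 0"
proof (induction n)
  case (Suc n)
  define E where "E m = dft N (\<lambda>k. 1 / a k) m" for m
  define D where "D = 1 - omega N ^ Suc n * y"
  have "D \<noteq> 0" using y_factors_nz[rule_format, of "Suc n"] by (simp add: D_def)
  have E_step: "x * omega N * E (- int n) = D * E (- int (Suc n))"
  proof -
    have rec: "x * omega N powi (- int n) * E (- int n)
        = (omega N powi (- int (Suc n)) - y) * E (- int (Suc n))"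
      using dft_recip_recurrence[of "- int (Suc n)"] by (simp add: E_def)
    have p1: "omega N ^ Suc n * omega N powi (- int n) = omega N"
      by (simp add: power_int_minus)
    have p2: "omega N ^ Suc n * omega N powi (- int (Suc n)) = 1"
      by (simp only: power_int_minus power_int_of_nat) (simp add: field_simps)
    have "x * (omega N ^ Suc n * omega N powi (- int n)) * E (- int n)
        = (omega N ^ Suc n * omega N powi (- int (Suc n)) - omega N ^ Suc n * y) * E (- int (Suc n))"
      using arg_cong[OF rec, of "\<lambda>z. omega N ^ Suc n * z"] by (simp add: algebra_simps)
    thus ?thesis unfolding p1 p2 D_def .
  qed
  have b_step: "b (int (Suc n)) * D = x * b (int n)"
    using b_rec[of "int (Suc n)"] by (simp add: D_def flip: power_int_of_nat)
  have "D * (E (- int (Suc n)) * b 0) = x * omega N * (E (- int n) * b 0)"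
    by (simp add: E_step flip: mult.assoc)
  also have "\<dots> = D * (omega N ^ Suc n * b (int (Suc n)) * E 0)"
    using Suc.IH b_step by (simp add: E_def algebra_simps)
  finally show ?case using \<open>D \<noteq> 0\<close> by (simp add: E_def)
qed simp

text \<open>Parseval's identity for \<open>a\<close> and \<open>1/a\<close>, evaluated with the two proportionality lemmas and
  the partial-fraction sum, pins down the constant \<open>F(n) b(n-1)\<close> in terms of \<open>E(0)\<close>.\<close>
lemma dft_constant_value:
  "dft N a 0 * b (-1) * dft N (\<lambda>k. 1 / a k) 0 = of_nat N * b 0 * (x / y) ^ (N - 1)"
proof -
  define C where "C = dft N a 0 * b (-1)"
  define E where "E m = dft N (\<lambda>k. 1 / a k) m" for m
  have summand: "dft N a (int n) * E (- int n)
      = C * E 0 / b 0 * x * (omega N ^ n / (1 - omega N ^ n * y))" for n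
  proof -
    define D where "D = 1 - omega N ^ n * y"
    have "D \<noteq> 0" using y_factors_nz by (simp add: D_def)
    have F: "dft N a (int n) = C / b (int n - 1)"
      using dft_times_b_constant[of "int n"] b_nz by (simp add: C_def eq_divide_eq)
    have E: "E (- int n) = omega N ^ n * b (int n) * E 0 / b 0"
      using dft_recip_reflected[of n] b_nz[of 0] by (simp add: E_def eq_divide_eq)
    have B: "b (int n) = x * b (int n - 1) / D"
      using b_rec[of "int n"] \<open>D \<noteq> 0\<close> by (simp add: D_def eq_divide_eq flip: power_int_of_nat)
    show ?thesis
      unfolding F E B D_def[symmetric] using b_nz[of "int n - 1"] by (simp add: field_simps)
  qed
  have x_power: "1 - y ^ N = x * x ^ (N - 1)"
    using curve N_pos by (simp add: algebra_simps flip: power_Suc)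
  have "of_nat N * of_nat N = (\<Sum>n<N. dft N a (int n) * E (- int n))"
    using dft_parseval[OF N_pos, of a "\<lambda>k. 1 / a k"] a_nz by (simp add: E_def)
  also have "\<dots> = C * E 0 / b 0 * x * (\<Sum>n<N. omega N ^ n / (1 - omega N ^ n * y))"
    by (simp add: summand sum_distrib_left)
  also have "(\<Sum>n<N. omega N ^ n / (1 - omega N ^ n * y)) = of_nat N * y ^ (N - 1) / (1 - y ^ N)"
    using x_power x_nz by (intro sum_omega_over_one_minus N_pos y_factors_nz) simp
  finally have "of_nat N * of_nat N = C * E 0 / b 0 * x * (of_nat N * y ^ (N - 1) / (x * x ^ (N - 1)))"
    unfolding x_power .
  thus ?thesis
    using N_pos x_nz y_nz b_nz[of 0] by (simp add: C_def E_def power_divide field_simps)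
qed

end

text \<open>The main theorem: instantiate the locale with \<open>a = w(x,y|.)\<close> and \<open>b = w(y,x|.)\<close> and
  rewrite \<open>lambda(y,x) = t E(0) / b(0)\<close>.  Only the recurrences of \<open>w\<close> enter.\<close>
theorem mainTheorem4:
  fixes N :: nat and x y s t :: complex and W :: "complex \<Rightarrow> complex \<Rightarrow> complex"
  assumes N2: "N \<ge> 2"
    and curve: "x ^ N + y ^ N = 1"
    and x0: "x \<noteq> 0" and y0: "y \<noteq> 0"
    and nzx: "\<forall>j::nat. 1 - omega N ^ j * x \<noteq> 0"
    and nzy: "\<forall>j::nat. 1 - omega N ^ j * y \<noteq> 0"
    and branchx: "\<forall>n::int. is_w0 N W (omega N powi n * x) y"
    and branchy: "\<forall>n::int. is_w0 N W (omega N powi n * y) x"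
    and shiftx: "\<forall>n::int. wfun N W x y n = W (omega N powi n * x) y"
    and shifty: "\<forall>n::int. wfun N W y x n = W (omega N powi n * y) x"
    and s_sq: "s ^ 2 = (x / y) ^ (N - 1)"
    and t_sq: "t ^ 2 = (y / x) ^ (N - 1)"
    and st: "s * t = 1"
    and wxy0: "\<forall>n::int. wfun N W x y n \<noteq> 0"
    and wyx0: "\<forall>n::int. wfun N W y x n \<noteq> 0"
    and lam0: "lam N W t y x \<noteq> 0"
  shows "\<forall>n::int. (\<Sum>k=0..N-1. wfun N W x y (int k) * omega N powi (n * int k))
           = of_nat N * (s / lam N W t y x) * (1 / wfun N W y x (n - 1))"
proof
  fix n :: int
  let ?a = "wfun N W x y" and ?b = "wfun N W y x"
  have N: "N > 0" using N2 by simp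
  have curve': "y ^ N + x ^ N = 1" using curve by (simp add: add.commute)
  interpret recurrence_pair N x y ?a ?b
    using N curve x0 y0 nzy wxy0 wyx0 wfun_recurrence[OF N curve nzx] wfun_recurrence[OF N curve' nzy]
    by unfold_locales (auto simp: wfun_periodic)
  define E0 where "E0 = dft N (\<lambda>k. 1 / ?a k) 0"
  have interval: "{0..N-1} = {..<N}" using N by auto
  have lam: "lam N W t y x = t / ?b 0 * E0"
    unfolding lam_def interval by (simp add: E0_def dft_def wfun_zero)
  have "E0 \<noteq> 0" using lam0 lam by auto
  have s_inv: "s = 1 / t" using st by (auto simp: eq_divide_eq)
  have "(\<Sum>k=0..N-1. ?a (int k) * omega N powi (n * int k)) = dft N ?a n"
    unfolding interval dft_def ..
  also have "\<dots> = dft N ?a 0 * ?b (-1) / ?b (n - 1)"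
    using dft_times_b_constant[of n] wyx0 by (simp add: eq_divide_eq)
  also have "dft N ?a 0 * ?b (-1) = of_nat N * ?b 0 * s ^ 2 / E0"
    using dft_constant_value s_sq \<open>E0 \<noteq> 0\<close> by (simp add: E0_def eq_divide_eq)
  finally show "(\<Sum>k=0..N-1. ?a (int k) * omega N powi (n * int k))
      = of_nat N * (s / lam N W t y x) * (1 / ?b (n - 1))"
    using \<open>E0 \<noteq> 0\<close> wyx0 unfolding lam s_inv by (simp add: field_simps power2_eq_square)
qed

end
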